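(* With notation as below, the inequality \[ \mathbb E\bigl(|\mathcal T_1|-1+t\bigr)^{\alpha}\le \mathbb E\bigl(|\mathcal T_2|-1+t\bigr)^{\alpha} \] holds for all negative integers $\alpha$ and all $t\in(0,\infty)$ if and only if $\Phi_1(t)\le\Phi_2(t)$ for all $t\in(0,1)$; and in that case the inequality holds for all real $\alpha<0$ and all $t\in(0,\infty)$.
   Context: For $j=1,2$, let $\xi_j$ be a random variable with values in $\{0,1,2,\dots\}$ with $\mathbb E\xi_j=1$ and $0<\operatorname{Var}\xi_j<\infty$, with probability generating function $\Phi_j(t)=\mathbb E t^{\xi_j}$, and let $\mathcal T_j$ be a Galton–Watson tree with offspring distribution $\xi_j$; $|\mathcal T_j|$ is its number of vertices. *)

theory Defs
  imports "HOL-Probability.Probability"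
begin

text \<open>Finite rooted plane (ordered) trees; a vertex is a node with its list of children.\<close>
datatype ptree = Node "ptree list"

fun tsize :: "ptree \<Rightarrow> nat" where
  "tsize (Node ts) = Suc (sum_list (map tsize ts))"

text \<open>Galton--Watson probability of a given finite plane tree: the product over all
  vertices v of p(number of children of v).\<close>
fun gw_weight :: "(nat \<Rightarrow> real) \<Rightarrow> ptree \<Rightarrow> real" where
  "gw_weight p (Node ts) = p (length ts) * prod_list (map (gw_weight p) ts)"

text \<open>P(|T| = n) for the Galton--Watson tree T with offspring distribution xi
  (the set of plane trees with n vertices is finite).\<close>
definition gw_size_prob :: "nat pmf \<Rightarrow> nat \<Rightarrow> real" where
  "gw_size_prob xi n = (\<Sum>t\<in>{t. tsize t = n}. gw_weight (pmf xi) t)"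

text \<open>E (|T| - 1 + t) powr alpha, summing over the values |T| = n+1, n \<ge> 0.\<close>
definition gw_moment :: "nat pmf \<Rightarrow> real \<Rightarrow> real \<Rightarrow> real" where
  "gw_moment xi \<alpha> t = (\<Sum>n. gw_size_prob xi (Suc n) * (real n + t) powr \<alpha>)"

definition pgf :: "nat pmf \<Rightarrow> real \<Rightarrow> real" where
  "pgf xi t = measure_pmf.expectation xi (\<lambda>k. t ^ k)"

definition critical_finvar :: "nat pmf \<Rightarrow> bool" where
  "critical_finvar xi \<longleftrightarrow>
     measure_pmf.expectation xi real = 1 \<and>
     integrable (measure_pmf xi) (\<lambda>k. (real k)\<^sup>2) \<and>
     measure_pmf.variance xi real > 0"

end

theory Submission
  imports Defs
begin

text \<open>The size generating function \<open>F(x) = E x^|T|\<close> of a Galton--Watson tree satisfies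
  \<open>F(x) = x \<Phi>(F(x))\<close>, and for \<open>0 \<le> x < 1\<close> the convex function \<open>h(y) = x \<Phi>(y) - y\<close> on \<open>[0,1]\<close>
  changes sign exactly at \<open>F(x)\<close>: \<open>y \<le> F(x)\<close> iff \<open>h(y) \<ge> 0\<close>. Hence \<open>\<Phi>\<^sub>1 \<le> \<Phi>\<^sub>2\<close> on \<open>(0,1)\<close>
  gives \<open>F\<^sub>1 \<le> F\<^sub>2\<close> on \<open>(0,1)\<close>. Conversely every \<open>y \<in> (0,1)\<close> equals \<open>F\<^sub>1(x)\<close> for
  \<open>x = y / \<Phi>\<^sub>1(y)\<close>, which lies in \<open>(0,1)\<close> because \<open>\<Phi>\<^sub>1(y) > y\<close> for a critical offspring law
  with positive variance.

  Negative moments are Laplace transforms of the generating function,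
  \<open>\<Gamma>(\<beta>) E (|T| - 1 + t) powr -\<beta> = \<integral>\<^sub>0\<^sup>\<infinity> s powr (\<beta> - 1) e^(-t s) E e^(-s (|T| - 1)) ds\<close>, so the order of
  the generating functions passes to every negative moment. Conversely
  \<open>(m c)^m (n + m c) powr -m = (1 + n / (m c)) powr -m \<longrightarrow> e^(-n / c)\<close> as \<open>m \<rightarrow> \<infinity>\<close>, so the integer
  negative moments at \<open>t = m c\<close> recover \<open>E x^(|T| - 1)\<close> for \<open>x = e^(-1 / c)\<close>.\<close>

section \<open>Plane trees of bounded size\<close>

lemma tsize_neq_0: "tsize t \<noteq> 0"
  by (cases t) auto

lemma length_le_sum_list_tsize: "length ts \<le> sum_list (map tsize ts)"
proof -
  have "length ts = sum_list (map (\<lambda>_. 1::nat) ts)"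
    by (induction ts) auto
  also have "\<dots> \<le> sum_list (map tsize ts)"
    using tsize_neq_0 by (intro sum_list_mono) (simp add: Suc_le_eq)
  finally show ?thesis .
qed

lemma finite_tsize_le: "finite {t. tsize t \<le> n}"
proof (induction n)
  case 0
  then show ?case
    by (simp add: tsize_neq_0)
next
  case (Suc m)
  let ?L = "{ts. set ts \<subseteq> {t. tsize t \<le> m} \<and> length ts \<le> m}"
  have "{t. tsize t \<le> Suc m} \<subseteq> Node ` ?L"
  proof
    fix t assume "t \<in> {t. tsize t \<le> Suc m}"
    then obtain ts where t: "t = Node ts" and ts: "sum_list (map tsize ts) \<le> m"
      by (cases t) auto
    have "set ts \<subseteq> {t. tsize t \<le> m}"
      using ts member_le_sum_list[of _ "map tsize ts"] by fastforce
    moreover have "length ts \<le> m"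
      using ts length_le_sum_list_tsize[of ts] by simp
    ultimately show "t \<in> Node ` ?L"
      using t by auto
  qed
  moreover have "finite ?L"
    using Suc by (rule finite_lists_length_le)
  ultimately show ?case
    using finite_subset by blast
qed

lemma finite_tsize_eq: "finite {t. tsize t = n}"
  by (rule finite_subset[OF _ finite_tsize_le[of n]]) auto

section \<open>Sums over lists and trees in \<open>ennreal\<close>\<close>

abbreviation nn_sum :: "('a \<Rightarrow> ennreal) \<Rightarrow> ennreal" where
  "nn_sum f \<equiv> \<integral>\<^sup>+ x. f x \<partial>count_space UNIV"

lemma nn_sum_lists_length:
  fixes f :: "'a \<Rightarrow> ennreal"
  shows "nn_sum (\<lambda>ts. if length ts = k then prod_list (map f ts) else 0) = nn_sum f ^ k"
proof (induction k)
  case 0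
  have "(\<lambda>ts::'a list. if length ts = 0 then prod_list (map f ts) else 0) = indicator {[]}"
    by (auto simp: indicator_def)
  then show ?case
    by (simp add: emeasure_count_space_finite)
next
  case (Suc k)
  define h where "h = (\<lambda>ts. if length ts = Suc k then prod_list (map f ts) else 0)"
  have "bij_betw (\<lambda>p. fst p # snd p) UNIV {ts. ts \<noteq> []}"
    by (rule bij_betwI[where g="\<lambda>ts. (hd ts, tl ts)"]) auto
  from nn_integral_bij_count_space[OF this, of h]
  have "(\<integral>\<^sup>+ ts. h ts \<partial>count_space {ts. ts \<noteq> []})
      = (\<integral>\<^sup>+ p. h (fst p # snd p) \<partial>count_space UNIV)"
    by simp
  moreover have "nn_sum h = (\<integral>\<^sup>+ ts. h ts \<partial>count_space {ts. ts \<noteq> []})"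
    by (rule nn_integral_count_space_eq) (auto simp: h_def)
  ultimately have "nn_sum h = (\<integral>\<^sup>+ p. h (fst p # snd p) \<partial>count_space UNIV)"
    by simp
  also have "\<dots> = nn_sum (\<lambda>t. nn_sum (\<lambda>ts. h (t # ts)))"
    using nn_integral_fst_count_space[of "\<lambda>p. h (fst p # snd p)"] by simp
  also have "\<dots> = nn_sum (\<lambda>t. f t * nn_sum (\<lambda>ts. if length ts = k then prod_list (map f ts) else 0))"
    by (auto simp: h_def nn_integral_cmult[symmetric] intro!: nn_integral_cong)
  also have "\<dots> = nn_sum f ^ Suc k"
    by (simp add: Suc nn_integral_multc)
  finally show ?case
    by (simp add: h_def)
qed

lemma nn_sum_lists:
  fixes f :: "'a \<Rightarrow> ennreal" and c :: "nat \<Rightarrow> ennreal"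
  shows "nn_sum (\<lambda>ts. c (length ts) * prod_list (map f ts)) = (\<Sum>k. c k * nn_sum f ^ k)"
proof -
  have "c (length ts) * prod_list (map f ts)
      = (\<Sum>k. c k * (if length ts = k then prod_list (map f ts) else 0))" for ts
    using sums_unique[OF sums_single[of "length ts" "\<lambda>_. c (length ts) * prod_list (map f ts)"]]
    by (simp add: if_distrib eq_commute[of "length ts"] cong: if_cong)
  then have "nn_sum (\<lambda>ts. c (length ts) * prod_list (map f ts))
      = (\<Sum>k. nn_sum (\<lambda>ts. c k * (if length ts = k then prod_list (map f ts) else 0)))"
    by (simp add: nn_integral_suminf)
  also have "\<dots> = (\<Sum>k. c k * nn_sum f ^ k)"
    by (simp add: nn_integral_cmult nn_sum_lists_length)
  finally show ?thesis .
qed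

lemma nn_sum_Node: "nn_sum (g :: ptree \<Rightarrow> ennreal) = nn_sum (\<lambda>ts. g (Node ts))"
proof -
  have "bij_betw Node UNIV UNIV"
    by (rule bij_betwI[where g="\<lambda>t. case t of Node ts \<Rightarrow> ts"]) (auto split: ptree.splits)
  from nn_integral_bij_count_space[OF this, of g] show ?thesis
    by simp
qed

section \<open>Probability generating functions\<close>

lemma pmf_expectation_sums:
  fixes f :: "nat \<Rightarrow> real"
  assumes "integrable (measure_pmf xi) f"
  shows "(\<lambda>k. pmf xi k * f k) sums measure_pmf.expectation xi f"
proof -
  have "integrable (count_space UNIV) (\<lambda>k. pmf xi k *\<^sub>R f k)"
    using assms integrable_density[of f "count_space UNIV" "pmf xi"]
    by (simp add: measure_pmf_eq_density[symmetric])
  moreover have "measure_pmf.expectation xi f = integral\<^sup>L (count_space UNIV) (\<lambda>k. pmf xi k *\<^sub>R f k)"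
    using integral_density[of f "count_space UNIV" "pmf xi"]
    by (simp add: measure_pmf_eq_density[symmetric])
  ultimately show ?thesis
    using sums_integral_count_space_nat by simp
qed

lemma pgf_sums:
  assumes "\<bar>y\<bar> \<le> 1"
  shows "(\<lambda>k. pmf xi k * y ^ k) sums pgf xi y"
  unfolding pgf_def
proof (rule pmf_expectation_sums, rule measure_pmf.integrable_const_bound[where B=1])
  show "AE k in measure_pmf xi. norm (y ^ k) \<le> 1"
    using assms by (simp add: power_abs power_le_one)
qed simp

lemma pgf_1: "pgf xi 1 = 1"
  unfolding pgf_def power_one by simp

lemma pmf_sums_1: "(\<lambda>k. pmf xi k) sums 1"
  using pgf_sums[of 1 xi] by (simp add: pgf_1)

lemma pgf_nonneg: "0 \<le> y \<Longrightarrow> y \<le> 1 \<Longrightarrow> 0 \<le> pgf xi y"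
  using sums_le[of "\<lambda>_. 0" "\<lambda>k. pmf xi k * y ^ k" 0 "pgf xi y"] pgf_sums[of y xi] by auto

lemma suminf_ennreal_pgf:
  assumes "0 \<le> y" "y \<le> 1"
  shows "(\<Sum>k. ennreal (pmf xi k) * ennreal y ^ k) = ennreal (pgf xi y)"
proof -
  have "(\<Sum>k. ennreal (pmf xi k) * ennreal y ^ k) = (\<Sum>k. ennreal (pmf xi k * y ^ k))"
    using assms by (simp add: ennreal_mult ennreal_power)
  also have "\<dots> = ennreal (pgf xi y)"
    using assms pgf_sums[of y xi] by (simp add: suminf_ennreal2 sums_summable sums_unique[symmetric])
  finally show ?thesis .
qed

lemma convex_on_pgf: "convex_on {0..1} (pgf xi)"
proof (rule convex_onI)
  fix t a c :: real
  assume t: "0 < t" "t < 1" and a: "a \<in> {0..1}" and c: "c \<in> {0..1}"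
  have "(1 - t) * a + t * c \<in> {0..1}"
    using a c t convex_bound_le[of a 1 c "1 - t" t] by (auto intro: add_nonneg_nonneg)
  then have lhs: "(\<lambda>k. pmf xi k * ((1 - t) * a + t * c) ^ k) sums pgf xi ((1 - t) * a + t * c)"
    by (intro pgf_sums) auto
  have rhs: "(\<lambda>k. (1 - t) * (pmf xi k * a ^ k) + t * (pmf xi k * c ^ k))
      sums ((1 - t) * pgf xi a + t * pgf xi c)"
    using a c by (intro sums_add sums_mult pgf_sums) auto
  have "pmf xi k * ((1 - t) * a + t * c) ^ k \<le> (1 - t) * (pmf xi k * a ^ k) + t * (pmf xi k * c ^ k)"
    for k
  proof -
    have "convex_on {0..} (\<lambda>x::real. x ^ k)"
      using convex_power_even[of k] convex_power_odd[of k] convex_on_subset by blast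
    then have "((1 - t) * a + t * c) ^ k \<le> (1 - t) * a ^ k + t * c ^ k"
      using convex_onD[of "{0..}" "\<lambda>x::real. x ^ k" t a c] a c t by simp
    then have "pmf xi k * ((1 - t) * a + t * c) ^ k \<le> pmf xi k * ((1 - t) * a ^ k + t * c ^ k)"
      by (rule mult_left_mono) simp
    then show ?thesis
      by (simp add: algebra_simps)
  qed
  then show "pgf xi ((1 - t) *\<^sub>R a + t *\<^sub>R c) \<le> (1 - t) * pgf xi a + t * pgf xi c"
    using sums_le[OF _ lhs rhs] by simp
qed simp

section \<open>Critical offspring laws\<close>

lemma critical_finvar_mean_sums:
  assumes "critical_finvar xi"
  shows "(\<lambda>k. pmf xi k * real k) sums 1"
proof -
  have mean: "measure_pmf.expectation xi real = 1"
    using assms by (simp add: critical_finvar_def)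
  then have "integrable (measure_pmf xi) real"
    using not_integrable_integral_eq by fastforce
  from pmf_expectation_sums[OF this] show ?thesis
    by (simp add: mean)
qed

text \<open>A law on \<open>{0,1}\<close> with mean 1 is the point mass at 1, which has variance 0.\<close>

lemma critical_finvar_pmf_ge_2:
  assumes "critical_finvar xi"
  obtains k where "2 \<le> k" "0 < pmf xi k"
proof -
  have "\<exists>k\<ge>2. 0 < pmf xi k"
  proof (rule ccontr)
    assume "\<not> (\<exists>k\<ge>2. 0 < pmf xi k)"
    then have zero: "pmf xi k = 0" if "2 \<le> k" for k
      using that pmf_nonneg[of xi k] by (metis less_eq_real_def)
    have finite: "(\<lambda>k. pmf xi k * f k) sums (\<Sum>k\<in>{0,1}. pmf xi k * f k)" for f :: "nat \<Rightarrow> real"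
      by (rule sums_finite) (use zero in auto)
    have mean: "measure_pmf.expectation xi real = 1"
      and "measure_pmf.variance xi real > 0"
      using assms by (auto simp: critical_finvar_def)
    then have var: "measure_pmf.expectation xi (\<lambda>k. (real k - 1)\<^sup>2) > 0"
      by simp
    then have "integrable (measure_pmf xi) (\<lambda>k. (real k - 1)\<^sup>2)"
      using not_integrable_integral_eq by fastforce
    from pmf_expectation_sums[OF this]
    have "measure_pmf.expectation xi (\<lambda>k. (real k - 1)\<^sup>2) = pmf xi 0"
      using finite[of "\<lambda>k. (real k - 1)\<^sup>2"] sums_unique2 by fastforce
    moreover have "pmf xi 1 = 1"
      using critical_finvar_mean_sums[OF assms] finite[of real] sums_unique2 by fastforce
    moreover have "pmf xi 0 + pmf xi 1 = 1"
      using pmf_sums_1[of xi] finite[of "\<lambda>_. 1"] sums_unique2 by fastforce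
    ultimately show False
      using var by simp
  qed
  with that show ?thesis
    by blast
qed

lemma Bernoulli_inequality_strict:
  fixes x :: real
  assumes "-1 \<le> x" "x \<noteq> 0" "2 \<le> n"
  shows "1 + real n * x < (1 + x) ^ n"
proof -
  obtain k where n: "n = Suc k" and k: "1 \<le> k"
    using assms(3) by (cases n) auto
  have "0 < real k * x\<^sup>2"
    using k assms(2) by simp
  then have "1 + real n * x < (1 + x) * (1 + real k * x)"
    by (simp add: n power2_eq_square algebra_simps)
  also have "\<dots> \<le> (1 + x) ^ n"
    unfolding n power_Suc using Bernoulli_inequality[OF assms(1), of k] assms(1)
    by (intro mult_left_mono) simp_all
  finally show ?thesis .
qed

text \<open>\<open>\<Phi>(y) - y = \<Sum>\<^sub>k p\<^sub>k (y\<^sup>k - 1 - k (y - 1))\<close> by \<open>\<Sum> p\<^sub>k = \<Sum> k p\<^sub>k = 1\<close>; every term is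
  nonnegative by Bernoulli's inequality, and the term of some \<open>k \<ge> 2\<close> is positive.\<close>

lemma pgf_gt_id:
  assumes "critical_finvar xi" "0 \<le> y" "y < 1"
  shows "y < pgf xi y"
proof -
  obtain k0 where k0: "2 \<le> k0" "0 < pmf xi k0"
    using critical_finvar_pmf_ge_2[OF assms(1)] by blast
  let ?d = "\<lambda>k. y ^ k - (1 + real k * (y - 1))"
  have "(\<lambda>k. pmf xi k * y ^ k - pmf xi k - pmf xi k * real k * (y - 1))
      sums (pgf xi y - 1 - 1 * (y - 1))"
    using assms by (intro sums_diff sums_mult2 pgf_sums pmf_sums_1 critical_finvar_mean_sums) auto
  then have sums: "(\<lambda>k. pmf xi k * ?d k) sums (pgf xi y - y)"
    by (simp add: algebra_simps)
  have "?d k \<ge> 0" for k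
    using Bernoulli_inequality[of "y - 1" k] assms by simp
  moreover have "?d k0 > 0"
    using Bernoulli_inequality_strict[of "y - 1" k0] assms k0 by simp
  ultimately have "0 < (\<Sum>k. pmf xi k * ?d k)"
    using k0 by (intro suminf_pos2[OF sums_summable[OF sums], of k0]) auto
  with sums_unique[OF sums] show ?thesis
    by simp
qed

section \<open>The size generating function\<close>

text \<open>\<open>tree_weight (pmf \<xi>) x t\<close> is \<open>gw_weight (pmf \<xi>) t * x ^ tsize t\<close> computed in \<open>ennreal\<close>, so that
  it can be summed over all trees before anything is known about convergence.\<close>

fun tree_weight :: "(nat \<Rightarrow> ennreal) \<Rightarrow> ennreal \<Rightarrow> ptree \<Rightarrow> ennreal" where
  "tree_weight p x (Node ts) = x * (p (length ts) * prod_list (map (tree_weight p x) ts))"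

lemma nn_sum_tree_weight:
  "nn_sum (tree_weight p x) = x * (\<Sum>k. p k * nn_sum (tree_weight p x) ^ k)"
proof -
  have "nn_sum (tree_weight p x)
      = nn_sum (\<lambda>ts. x * (p (length ts) * prod_list (map (tree_weight p x) ts)))"
    by (subst nn_sum_Node) simp
  also have "\<dots> = x * nn_sum (\<lambda>ts. p (length ts) * prod_list (map (tree_weight p x) ts))"
    by (rule nn_integral_cmult) simp
  finally show ?thesis
    by (simp only: nn_sum_lists)
qed

text \<open>The equation of \<open>nn_sum_tree_weight\<close> alone cannot bound the total weight, since \<open>\<top>\<close>
  solves it too; truncating by size makes an induction possible.\<close>

lemma nn_sum_tree_weight_truncated_le_1:
  assumes "x \<le> 1" and "(\<Sum>k. p k) = 1"
  shows "nn_sum (\<lambda>t. tree_weight p x t * indicator {t. tsize t \<le> n} t) \<le> 1"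
proof (induction n)
  case 0
  then show ?case
    by (simp add: indicator_def tsize_neq_0)
next
  case (Suc n)
  let ?w = "\<lambda>n t. tree_weight p x t * indicator {t. tsize t \<le> n} t"
  have "?w (Suc n) (Node ts) \<le> x * (p (length ts) * prod_list (map (?w n) ts))" for ts
  proof (cases "tsize (Node ts) \<le> Suc n")
    case True
    then have "\<forall>t\<in>set ts. tsize t \<le> n"
      using member_le_sum_list[of _ "map tsize ts"] by fastforce
    then have "prod_list (map (?w n) ts) = prod_list (map (tree_weight p x) ts)"
      by (intro arg_cong[where f=prod_list] map_cong) (auto simp: indicator_def)
    moreover have "?w (Suc n) (Node ts) = tree_weight p x (Node ts)"
      using True by (simp add: indicator_def del: tsize.simps)
    ultimately show ?thesis
      by simp
  qed simp
  then have "nn_sum (?w (Suc n)) \<le> nn_sum (\<lambda>ts. x * (p (length ts) * prod_list (map (?w n) ts)))"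
    by (subst nn_sum_Node) (rule nn_integral_mono)
  also have "\<dots> = x * (\<Sum>k. p k * nn_sum (?w n) ^ k)"
    by (simp add: nn_integral_cmult nn_sum_lists)
  also have "\<dots> \<le> 1 * (\<Sum>k. p k * 1)"
    using Suc assms(1) by (intro mult_mono suminf_le mult_left_mono power_le_one) auto
  finally show ?case
    using assms(2) by simp
qed

lemma nn_sum_tree_weight_le_1:
  assumes "x \<le> 1" and "(\<Sum>k. p k) = 1"
  shows "nn_sum (tree_weight p x) \<le> 1"
proof -
  have "tree_weight p x t = (SUP n. tree_weight p x t * indicator {t. tsize t \<le> n} t)" for t
  proof (rule antisym)
    show "tree_weight p x t \<le> (SUP n. tree_weight p x t * indicator {t. tsize t \<le> n} t)"
      by (rule SUP_upper2[of "tsize t"]) auto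
  qed (rule SUP_least, simp add: indicator_def)
  then have "nn_sum (tree_weight p x) = nn_sum (\<lambda>t. SUP n. tree_weight p x t * indicator {t. tsize t \<le> n} t)"
    by simp
  also have "\<dots> = (SUP n. nn_sum (\<lambda>t. tree_weight p x t * indicator {t. tsize t \<le> n} t))"
    by (rule nn_integral_monotone_convergence_SUP) (auto simp: incseq_def le_fun_def indicator_def)
  also have "\<dots> \<le> 1"
    using nn_sum_tree_weight_truncated_le_1[OF assms] by (rule SUP_least)
  finally show ?thesis .
qed

lemma gw_weight_nonneg: "0 \<le> gw_weight (pmf xi) t"
  by (induction t) (auto intro!: mult_nonneg_nonneg prod_list_nonneg)

lemma prod_list_map_ennreal:
  "(\<And>t. t \<in> set ts \<Longrightarrow> 0 \<le> g t) \<Longrightarrow>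
    prod_list (map (\<lambda>t. ennreal (g t)) ts) = ennreal (prod_list (map g ts))"
proof (induction ts)
  case (Cons t ts)
  then have "0 \<le> g t" "0 \<le> prod_list (map g ts)"
    by (auto intro!: prod_list_nonneg)
  with Cons show ?case
    by (simp add: ennreal_mult)
qed simp

lemma prod_list_map_mult_power:
  fixes x :: "'a :: comm_semiring_1"
  shows "prod_list (map (\<lambda>t. f t * x ^ g t) ts) = prod_list (map f ts) * x ^ sum_list (map g ts)"
  by (induction ts) (simp_all add: power_add ac_simps)

lemma tree_weight_pmf:
  assumes "0 \<le> x"
  shows "tree_weight (\<lambda>k. ennreal (pmf xi k)) (ennreal x) t
      = ennreal (gw_weight (pmf xi) t * x ^ tsize t)"
proof (induction t)
  case (Node ts)
  have "prod_list (map (tree_weight (\<lambda>k. ennreal (pmf xi k)) (ennreal x)) ts)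
      = ennreal (prod_list (map (\<lambda>t. gw_weight (pmf xi) t * x ^ tsize t) ts))"
    using Node assms gw_weight_nonneg
    by (simp add: prod_list_map_ennreal[symmetric] cong: map_cong)
  moreover have "0 \<le> prod_list (map (gw_weight (pmf xi)) ts)"
    by (intro prod_list_nonneg) (auto simp: gw_weight_nonneg)
  ultimately show ?case
    using assms by (simp add: prod_list_map_mult_power ennreal_mult[symmetric] ac_simps)
qed

definition gw_size_gf :: "nat pmf \<Rightarrow> real \<Rightarrow> real" where
  "gw_size_gf xi x = (\<Sum>n. gw_size_prob xi n * x ^ n)"

lemma gw_size_prob_nonneg: "0 \<le> gw_size_prob xi n"
  unfolding gw_size_prob_def by (intro sum_nonneg) (simp add: gw_weight_nonneg)

lemma gw_size_prob_0: "gw_size_prob xi 0 = 0"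
  by (simp add: gw_size_prob_def tsize_neq_0)

lemma nn_sum_tree_weight_pmf:
  assumes "0 \<le> x"
  shows "nn_sum (tree_weight (\<lambda>k. ennreal (pmf xi k)) (ennreal x))
    = (\<Sum>n. ennreal (gw_size_prob xi n * x ^ n))"
proof -
  let ?w = "tree_weight (\<lambda>k. ennreal (pmf xi k)) (ennreal x)"
  have "(\<lambda>n. ?w t * indicator {t. tsize t = n} t) = (\<lambda>n. if n = tsize t then ?w t else 0)" for t
    by (auto simp: indicator_def)
  then have "?w t = (\<Sum>n. ?w t * indicator {t. tsize t = n} t)" for t
    using sums_unique[OF sums_single[of "tsize t" "\<lambda>_. ?w t"]] by simp
  then have "nn_sum ?w = nn_sum (\<lambda>t. \<Sum>n. ?w t * indicator {t. tsize t = n} t)"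
    by (intro nn_integral_cong) blast
  also have "\<dots> = (\<Sum>n. nn_sum (\<lambda>t. ?w t * indicator {t. tsize t = n} t))"
    by (rule nn_integral_suminf) simp
  also have "\<dots> = (\<Sum>n. ennreal (gw_size_prob xi n * x ^ n))"
  proof (intro suminf_cong)
    fix n
    have "nn_sum (\<lambda>t. ?w t * indicator {t. tsize t = n} t) = (\<Sum>t | tsize t = n. ?w t)"
      using nn_integral_indicator_finite[OF finite_tsize_eq, where M="count_space UNIV" and f="?w"]
      by (simp add: emeasure_count_space_finite)
    also have "\<dots> = ennreal (\<Sum>t | tsize t = n. gw_weight (pmf xi) t * x ^ n)"
      using assms gw_weight_nonneg by (simp add: tree_weight_pmf sum_ennreal)
    finally show "nn_sum (\<lambda>t. ?w t * indicator {t. tsize t = n} t) = ennreal (gw_size_prob xi n * x ^ n)"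
      by (simp add: gw_size_prob_def sum_distrib_right)
  qed
  finally show ?thesis .
qed

lemma nn_sum_tree_weight_pmf_le_1:
  assumes "x \<le> 1"
  shows "nn_sum (tree_weight (\<lambda>k. ennreal (pmf xi k)) (ennreal x)) \<le> 1"
  using assms pmf_sums_1[of xi]
  by (intro nn_sum_tree_weight_le_1) (auto simp: suminf_ennreal2 sums_summable sums_unique[symmetric])

lemma summable_gw_size_gf:
  assumes "0 \<le> x" "x \<le> 1"
  shows "summable (\<lambda>n. gw_size_prob xi n * x ^ n)"
proof (rule summable_suminf_not_top)
  show "0 \<le> gw_size_prob xi n * x ^ n" for n
    using assms gw_size_prob_nonneg by simp
  show "(\<Sum>n. ennreal (gw_size_prob xi n * x ^ n)) \<noteq> \<top>"
    using assms nn_sum_tree_weight_pmf[of x xi] nn_sum_tree_weight_pmf_le_1[of x xi]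
    by (auto simp: top_unique)
qed

lemma ennreal_gw_size_gf:
  assumes "0 \<le> x" "x \<le> 1"
  shows "ennreal (gw_size_gf xi x) = nn_sum (tree_weight (\<lambda>k. ennreal (pmf xi k)) (ennreal x))"
  unfolding gw_size_gf_def nn_sum_tree_weight_pmf[OF assms(1)]
  using assms gw_size_prob_nonneg by (intro suminf_ennreal2[symmetric] summable_gw_size_gf) auto

lemma gw_size_gf_nonneg:
  assumes "0 \<le> x" "x \<le> 1"
  shows "0 \<le> gw_size_gf xi x"
  unfolding gw_size_gf_def
  using assms gw_size_prob_nonneg by (intro suminf_nonneg summable_gw_size_gf) auto

lemma gw_size_gf_le_1:
  assumes "0 \<le> x" "x \<le> 1"
  shows "gw_size_gf xi x \<le> 1"
  using ennreal_gw_size_gf[OF assms, of xi] nn_sum_tree_weight_pmf_le_1[OF assms(2), of xi]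
  by (metis ennreal_le_1)

lemma gw_size_gf_fixpoint:
  assumes "0 \<le> x" "x \<le> 1"
  shows "gw_size_gf xi x = x * pgf xi (gw_size_gf xi x)"
proof -
  let ?F = "gw_size_gf xi x"
  have F: "0 \<le> ?F" "?F \<le> 1"
    using assms by (auto intro: gw_size_gf_nonneg gw_size_gf_le_1)
  have "ennreal ?F = ennreal x * (\<Sum>k. ennreal (pmf xi k) * ennreal ?F ^ k)"
    using nn_sum_tree_weight[of "\<lambda>k. ennreal (pmf xi k)" "ennreal x"]
    by (simp only: ennreal_gw_size_gf[OF assms])
  also have "\<dots> = ennreal (x * pgf xi ?F)"
    using assms F by (simp add: suminf_ennreal_pgf ennreal_mult pgf_nonneg)
  finally show ?thesis
    using assms F pgf_nonneg[OF F] by simp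
qed

lemma gw_size_gf_lt_1:
  assumes "0 \<le> x" "x < 1"
  shows "gw_size_gf xi x < 1"
proof -
  have "gw_size_gf xi x \<noteq> 1"
    using gw_size_gf_fixpoint[of x xi] assms by (auto simp: pgf_1)
  with gw_size_gf_le_1[of x xi] assms show ?thesis
    by simp
qed

lemma summable_mult_power_le_1:
  fixes y :: real
  assumes "\<And>n. 0 \<le> A n" "summable A" "\<bar>y\<bar> \<le> 1"
  shows "summable (\<lambda>n. A n * y ^ n)"
  using assms
  by (intro summable_comparison_test[OF _ assms(2)])
     (auto simp: abs_mult power_abs intro!: mult_left_le power_le_one)

lemma summable_gw_size_prob_Suc: "summable (\<lambda>n. gw_size_prob xi (Suc n))"
  using summable_gw_size_gf[of 1 xi] by (simp add: summable_Suc_iff)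

lemma gw_size_gf_eq_shifted:
  assumes "0 \<le> x" "x \<le> 1"
  shows "gw_size_gf xi x = x * (\<Sum>n. gw_size_prob xi (Suc n) * x ^ n)"
proof -
  have "summable (\<lambda>n. gw_size_prob xi (Suc n) * x ^ n)"
    using assms gw_size_prob_nonneg summable_gw_size_prob_Suc
    by (intro summable_mult_power_le_1) auto
  then have "x * (\<Sum>n. gw_size_prob xi (Suc n) * x ^ n) = (\<Sum>n. gw_size_prob xi (Suc n) * x ^ Suc n)"
    by (simp add: suminf_mult[symmetric] ac_simps)
  also have "\<dots> = gw_size_gf xi x"
    using suminf_split_head[OF summable_gw_size_gf[OF assms, of xi]]
    by (simp add: gw_size_gf_def gw_size_prob_0)
  finally show ?thesis ..
qed

section \<open>Comparing offspring laws through the size generating function\<close>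

lemma convex_on_neg_between:
  fixes f :: "real \<Rightarrow> real"
  assumes "convex_on S f" "a \<in> S" "c \<in> S" "f a \<le> 0" "f c < 0" "a < b" "b \<le> c"
  shows "f b < 0"
proof -
  define t where "t = (b - a) / (c - a)"
  have t: "0 < t" "t \<le> 1"
    using assms by (auto simp: t_def field_simps)
  have "t * (c - a) = b - a"
    using assms by (simp add: t_def)
  then have "b = (1 - t) * a + t * c"
    by (simp add: algebra_simps)
  then have "f b \<le> (1 - t) * f a + t * f c"
    using convex_onD[OF assms(1), of t a c] t assms(2,3) by simp
  also have "\<dots> < 0"
    using t assms(4,5) by (intro add_nonpos_neg mult_nonneg_nonpos mult_pos_neg) auto
  finally show ?thesis .
qed

text \<open>\<open>y \<mapsto> x \<Phi>(y) - y\<close> is convex, vanishes at \<open>F(x)\<close> and is negative at 1, so it is positive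
  on \<open>[0, F(x))\<close> and negative on \<open>(F(x), 1]\<close>.\<close>

lemma le_gw_size_gf_iff:
  assumes x: "0 \<le> x" "x < 1" and y: "0 \<le> y" "y \<le> 1"
  shows "y \<le> gw_size_gf xi x \<longleftrightarrow> y \<le> x * pgf xi y"
proof -
  let ?h = "\<lambda>y. x * pgf xi y - y" and ?F = "gw_size_gf xi x"
  have convex: "convex_on {0..1} ?h"
    using x by (intro convex_on_diff convex_on_cmul convex_on_pgf) (auto simp: concave_on_ident)
  have F: "?F \<in> {0..1}" "?h ?F = 0"
    using x gw_size_gf_fixpoint[of x xi] by (auto intro: gw_size_gf_nonneg gw_size_gf_le_1)
  have h1: "?h 1 < 0"
    using x by (simp add: pgf_1)
  show ?thesis
  proof
    assume "y \<le> ?F"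
    show "y \<le> x * pgf xi y"
    proof (rule ccontr)
      assume "\<not> y \<le> x * pgf xi y"
      then have "?h y \<le> 0" "y \<noteq> ?F"
        using F by auto
      with \<open>y \<le> ?F\<close> have "?h ?F < 0"
        using y F(1) by (intro convex_on_neg_between[OF convex _ _ _ h1]) auto
      with F show False
        by simp
    qed
  next
    assume "y \<le> x * pgf xi y"
    show "y \<le> ?F"
    proof (rule ccontr)
      assume "\<not> y \<le> ?F"
      then have "?h y < 0"
        using y F by (intro convex_on_neg_between[OF convex _ _ _ h1]) auto
      with \<open>y \<le> x * pgf xi y\<close> show False
        by simp
    qed
  qed
qed

lemma pgf_le_imp_gw_size_gf_le:
  assumes le: "\<And>y. 0 < y \<Longrightarrow> y < 1 \<Longrightarrow> pgf xi1 y \<le> pgf xi2 y"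
    and x: "0 \<le> x" "x < 1"
  shows "gw_size_gf xi1 x \<le> gw_size_gf xi2 x"
proof (cases "gw_size_gf xi1 x = 0")
  case True
  then show ?thesis
    using x gw_size_gf_nonneg[of x xi2] by simp
next
  case False
  let ?y = "gw_size_gf xi1 x"
  have y: "0 < ?y" "?y < 1"
    using False x gw_size_gf_nonneg[of x xi1] gw_size_gf_lt_1[of x xi1] by auto
  have "?y = x * pgf xi1 ?y"
    using x by (intro gw_size_gf_fixpoint) auto
  also have "\<dots> \<le> x * pgf xi2 ?y"
    using le[OF y] x by (intro mult_left_mono) auto
  finally show ?thesis
    using le_gw_size_gf_iff[of x ?y xi2] x y by simp
qed

lemma gw_size_gf_le_imp_pgf_le:
  assumes "critical_finvar xi1"
    and le: "\<And>x. 0 < x \<Longrightarrow> x < 1 \<Longrightarrow> gw_size_gf xi1 x \<le> gw_size_gf xi2 x"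
    and y: "0 < y" "y < 1"
  shows "pgf xi1 y \<le> pgf xi2 y"
proof -
  define x where "x = y / pgf xi1 y"
  have "y < pgf xi1 y"
    using pgf_gt_id[OF assms(1)] y by simp
  then have x: "0 < x" "x < 1" and y_eq: "y = x * pgf xi1 y"
    using y by (auto simp: x_def field_simps)
  have "y \<le> gw_size_gf xi1 x"
    using le_gw_size_gf_iff[of x y xi1] x y y_eq by simp
  also have "\<dots> \<le> gw_size_gf xi2 x"
    using le x by simp
  finally have "x * pgf xi1 y \<le> x * pgf xi2 y"
    using le_gw_size_gf_iff[of x y xi2] x y y_eq by simp
  then show ?thesis
    using x by simp
qed

section \<open>Negative moments of nonnegative sequences\<close>

lemma nn_integral_powr_exp_Gamma:
  fixes \<beta> c :: real
  assumes "0 < \<beta>" "0 < c"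
  shows "(\<integral>\<^sup>+ s. ennreal (indicator {0..} s * s powr (\<beta> - 1) * exp (- (c * s))) \<partial>lborel)
    = ennreal (Gamma \<beta> * c powr - \<beta>)"
proof -
  let ?I = "\<integral>\<^sup>+ s. ennreal (indicator {0..} s * s powr (\<beta> - 1) * exp (- (c * s))) \<partial>lborel"
  have "ennreal (Gamma \<beta>) = (\<integral>\<^sup>+ u. ennreal (indicator {0..} u * u powr (\<beta> - 1) / exp u) \<partial>lborel)"
    by (rule Gamma_conv_nn_integral_real[OF assms(1)])
  also have "\<dots> = ennreal c * (\<integral>\<^sup>+ s. ennreal (indicator {0..} (0 + c * s)
      * (0 + c * s) powr (\<beta> - 1) / exp (0 + c * s)) \<partial>lborel)"
    using assms(2) by (subst nn_integral_real_affine[where c=c and t=0]) auto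
  also have "(\<integral>\<^sup>+ s. ennreal (indicator {0..} (0 + c * s) * (0 + c * s) powr (\<beta> - 1)
      / exp (0 + c * s)) \<partial>lborel)
    = (\<integral>\<^sup>+ s. ennreal (c powr (\<beta> - 1))
      * ennreal (indicator {0..} s * s powr (\<beta> - 1) * exp (- (c * s))) \<partial>lborel)"
  proof (rule nn_integral_cong)
    fix s :: real
    have "0 \<le> c * s \<longleftrightarrow> 0 \<le> s"
      using assms(2) by (simp add: zero_le_mult_iff)
    then show "ennreal (indicator {0..} (0 + c * s) * (0 + c * s) powr (\<beta> - 1) / exp (0 + c * s))
      = ennreal (c powr (\<beta> - 1)) * ennreal (indicator {0..} s * s powr (\<beta> - 1) * exp (- (c * s)))"
      using assms(2)
      by (cases "0 \<le> s") (simp_all add: powr_mult exp_minus field_simps ennreal_mult[symmetric])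
  qed
  also have "\<dots> = ennreal (c powr (\<beta> - 1)) * ?I"
    by (rule nn_integral_cmult) simp
  finally have "ennreal (Gamma \<beta>) = ennreal (c powr \<beta>) * ?I"
    using assms(2) by (simp add: ennreal_mult[symmetric] mult.assoc[symmetric] powr_diff)
  then have "ennreal (c powr - \<beta>) * ennreal (Gamma \<beta>) = ennreal (c powr - \<beta> * c powr \<beta>) * ?I"
    using assms(2) by (simp add: ennreal_mult mult.assoc)
  then show ?thesis
    using assms Gamma_real_pos[OF assms(1)]
    by (simp add: powr_add[symmetric] ennreal_mult[symmetric] mult.commute)
qed

lemma summable_mult_shifted_powr:
  assumes "\<And>n. 0 \<le> A n" "summable A" "0 < t" "\<alpha> \<le> 0"
  shows "summable (\<lambda>n. A n * (real n + t) powr \<alpha>)"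
proof (rule summable_comparison_test[where g="\<lambda>n. A n * t powr \<alpha>"])
  have "(real n + t) powr \<alpha> \<le> t powr \<alpha>" for n
    using assms(3,4) by (intro powr_mono2') auto
  then show "\<exists>N. \<forall>n\<ge>N. norm (A n * (real n + t) powr \<alpha>) \<le> A n * t powr \<alpha>"
    using assms(1) by (auto simp: abs_mult intro: mult_left_mono)
qed (use assms(2) in \<open>intro summable_mult2\<close>)

lemma suminf_ennreal_mult_power_series:
  assumes "\<And>n. 0 \<le> A n" "summable A" "0 \<le> y" "y \<le> 1" "0 \<le> K"
  shows "(\<Sum>n. ennreal (A n * (K * y ^ n))) = ennreal (K * (\<Sum>n. A n * y ^ n))"
proof -
  have "summable (\<lambda>n. A n * y ^ n)"
    using assms by (intro summable_mult_power_le_1) auto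
  then have "(\<Sum>n. ennreal (K * (A n * y ^ n))) = ennreal (\<Sum>n. K * (A n * y ^ n))"
    using assms by (intro suminf_ennreal2 summable_mult) auto
  then show ?thesis
    using \<open>summable (\<lambda>n. A n * y ^ n)\<close> by (simp add: suminf_mult ac_simps)
qed

text \<open>Termwise this is \<open>nn_integral_powr_exp_Gamma\<close> with \<open>c = n + t\<close>.\<close>

lemma Gamma_mult_suminf_shifted_powr:
  assumes A: "\<And>n. 0 \<le> A n" "summable A" and "0 < \<beta>" "0 < t"
  shows "ennreal (Gamma \<beta> * (\<Sum>n. A n * (real n + t) powr - \<beta>))
    = (\<integral>\<^sup>+ s. ennreal (indicator {0..} s * s powr (\<beta> - 1) * exp (- (t * s))
        * (\<Sum>n. A n * exp (- s) ^ n)) \<partial>lborel)"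
proof -
  define K where "K s = indicator {0..} s * s powr (\<beta> - 1) * exp (- (t * s))" for s :: real
  have summable: "summable (\<lambda>n. A n * (real n + t) powr - \<beta>)"
    using assms by (intro summable_mult_shifted_powr) auto
  have Gamma: "0 < Gamma \<beta>"
    using assms(3) by (rule Gamma_real_pos)
  have "ennreal (Gamma \<beta> * (A n * (real n + t) powr - \<beta>))
      = (\<integral>\<^sup>+ s. ennreal (A n * (K s * exp (- s) ^ n)) \<partial>lborel)" for n
  proof -
    have "K s * exp (- s) ^ n = indicator {0..} s * s powr (\<beta> - 1) * exp (- ((real n + t) * s))"
      for s
      by (simp add: K_def exp_of_nat_mult[symmetric] exp_add[symmetric] algebra_simps)
    then have "(\<integral>\<^sup>+ s. ennreal (A n * (K s * exp (- s) ^ n)) \<partial>lborel)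
        = (\<integral>\<^sup>+ s. ennreal (A n)
          * ennreal (indicator {0..} s * s powr (\<beta> - 1) * exp (- ((real n + t) * s))) \<partial>lborel)"
      using A(1) by (intro nn_integral_cong) (simp add: ennreal_mult)
    also have "\<dots> = ennreal (A n) * ennreal (Gamma \<beta> * (real n + t) powr - \<beta>)"
      using assms by (simp add: nn_integral_cmult nn_integral_powr_exp_Gamma)
    finally have "(\<integral>\<^sup>+ s. ennreal (A n * (K s * exp (- s) ^ n)) \<partial>lborel)
        = ennreal (A n) * ennreal (Gamma \<beta> * (real n + t) powr - \<beta>)" .
    then show ?thesis
      using A(1)[of n] Gamma by (simp add: ennreal_mult[symmetric] ac_simps)
  qed
  then have "ennreal (Gamma \<beta> * (\<Sum>n. A n * (real n + t) powr - \<beta>))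
      = (\<Sum>n. \<integral>\<^sup>+ s. ennreal (A n * (K s * exp (- s) ^ n)) \<partial>lborel)"
    using summable Gamma A(1)
    by (simp add: suminf_mult[symmetric] suminf_ennreal2[symmetric] summable_mult)
  also have "\<dots> = (\<integral>\<^sup>+ s. (\<Sum>n. ennreal (A n * (K s * exp (- s) ^ n))) \<partial>lborel)"
    by (rule nn_integral_suminf[symmetric]) (simp add: K_def)
  also have "\<dots> = (\<integral>\<^sup>+ s. ennreal (K s * (\<Sum>n. A n * exp (- s) ^ n)) \<partial>lborel)"
  proof (rule nn_integral_cong)
    fix s :: real
    show "(\<Sum>n. ennreal (A n * (K s * exp (- s) ^ n))) = ennreal (K s * (\<Sum>n. A n * exp (- s) ^ n))"
    proof (cases "0 \<le> s")
      case True
      then show ?thesis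
        using A by (intro suminf_ennreal_mult_power_series) (auto simp: K_def)
    qed (simp add: K_def)
  qed
  finally show ?thesis
    by (simp add: K_def)
qed

lemma power_series_le_imp_shifted_powr_le:
  assumes A: "\<And>n. 0 \<le> A n" "summable A" and B: "\<And>n. 0 \<le> B n" "summable B"
    and le: "\<And>x. 0 < x \<Longrightarrow> x < 1 \<Longrightarrow> (\<Sum>n. A n * x ^ n) \<le> (\<Sum>n. B n * x ^ n)"
    and "\<alpha> < 0" "0 < t"
  shows "(\<Sum>n. A n * (real n + t) powr \<alpha>) \<le> (\<Sum>n. B n * (real n + t) powr \<alpha>)"
proof -
  define \<beta> where "\<beta> = - \<alpha>"
  have \<beta>: "0 < \<beta>" "\<alpha> = - \<beta>"
    using assms(6) by (auto simp: \<beta>_def)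
  have "ennreal (Gamma \<beta> * (\<Sum>n. A n * (real n + t) powr - \<beta>))
      \<le> ennreal (Gamma \<beta> * (\<Sum>n. B n * (real n + t) powr - \<beta>))"
    unfolding Gamma_mult_suminf_shifted_powr[OF A \<beta>(1) \<open>0 < t\<close>]
      Gamma_mult_suminf_shifted_powr[OF B \<beta>(1) \<open>0 < t\<close>]
  proof (rule nn_integral_mono, cases)
    fix s :: real
    assume "0 < s"
    then show "ennreal (indicator {0..} s * s powr (\<beta> - 1) * exp (- (t * s)) * (\<Sum>n. A n * exp (- s) ^ n))
      \<le> ennreal (indicator {0..} s * s powr (\<beta> - 1) * exp (- (t * s)) * (\<Sum>n. B n * exp (- s) ^ n))"
      using le[of "exp (- s)"] by (intro ennreal_leI mult_left_mono) auto
  qed (auto simp: indicator_def)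
  moreover have "0 \<le> Gamma \<beta> * (\<Sum>n. B n * (real n + t) powr - \<beta>)"
    using Gamma_real_pos[OF \<beta>(1)] B \<beta> \<open>0 < t\<close>
    by (intro mult_nonneg_nonneg suminf_nonneg summable_mult_shifted_powr) auto
  ultimately show ?thesis
    using Gamma_real_pos[OF \<beta>(1)] \<beta>(2) by (simp add: ennreal_le_iff)
qed

lemma tendsto_suminf_inverse_exp_limit:
  assumes A: "\<And>n. 0 \<le> A n" "summable A" and "0 < c"
  shows "(\<lambda>m. \<Sum>n. A n * inverse ((1 + real n / c / real m) ^ m))
    \<longlonglongrightarrow> (\<Sum>n. A n * inverse (exp (real n / c)))"
proof -
  have bound: "\<forall>\<^sub>F (n, m) in at_top \<times>\<^sub>F sequentially.
      norm (A n * inverse ((1 + real n / c / real m) ^ m)) \<le> A n"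
  proof (rule always_eventually, clarify)
    fix n m :: nat
    have "1 \<le> (1 + real n / c / real m) ^ m"
      using \<open>0 < c\<close> by (intro one_le_power) simp
    then show "norm (A n * inverse ((1 + real n / c / real m) ^ m)) \<le> A n"
      using A(1)[of n] by (simp add: abs_mult mult_left_le inverse_le_1_iff)
  qed
  have limit: "(\<lambda>m. A n * inverse ((1 + real n / c / real m) ^ m))
      \<longlonglongrightarrow> A n * inverse (exp (real n / c))" for n
    by (intro tendsto_mult_left tendsto_inverse tendsto_exp_limit_sequentially) simp
  from tannerys_theorem[OF limit bound A(2)] show ?thesis
    by simp
qed

lemma suminf_inverse_power_eq_shifted_powr:
  assumes A: "\<And>n. 0 \<le> A n" "summable A" and "0 < c" "1 \<le> m"
  shows "(\<Sum>n. A n * inverse ((1 + real n / c / real m) ^ m))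
    = (real m * c) ^ m * (\<Sum>n. A n * (real n + real m * c) powr - real m)"
proof -
  have mc: "0 < real m * c"
    using assms(3,4) by simp
  have termwise: "A n * inverse ((1 + real n / c / real m) ^ m)
      = (real m * c) ^ m * (A n * (real n + real m * c) powr - real m)" for n
  proof -
    have "0 < real n + real m * c"
      using mc by simp
    moreover have "1 + real n / c / real m = (real n + real m * c) / (real m * c)"
      using assms(3,4) by (simp add: field_simps)
    ultimately show ?thesis
      using mc by (simp add: powr_minus powr_realpow power_divide field_simps)
  qed
  have "summable (\<lambda>n. A n * (real n + real m * c) powr - real m)"
    using A mc by (intro summable_mult_shifted_powr) auto
  then show ?thesis
    unfolding termwise by (rule suminf_mult)
qed

lemma shifted_powr_le_imp_power_series_le:
  assumes A: "\<And>n. 0 \<le> A n" "summable A" and B: "\<And>n. 0 \<le> B n" "summable B"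
    and le: "\<And>m t. 1 \<le> m \<Longrightarrow> 0 < t \<Longrightarrow>
      (\<Sum>n. A n * (real n + t) powr - real m) \<le> (\<Sum>n. B n * (real n + t) powr - real m)"
    and x: "0 < x" "x < 1"
  shows "(\<Sum>n. A n * x ^ n) \<le> (\<Sum>n. B n * x ^ n)"
proof -
  define c where "c = - 1 / ln x"
  have c: "0 < c"
    using x by (simp add: c_def)
  have x_pow: "inverse (exp (real n / c)) = x ^ n" for n
    using x by (simp add: c_def exp_minus exp_of_nat_mult)
  have le_eventually: "\<forall>\<^sub>F m in sequentially. (\<Sum>n. A n * inverse ((1 + real n / c / real m) ^ m))
      \<le> (\<Sum>n. B n * inverse ((1 + real n / c / real m) ^ m))"
  proof (rule eventually_sequentiallyI[of 1])
    fix m :: nat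
    assume m: "1 \<le> m"
    then show "(\<Sum>n. A n * inverse ((1 + real n / c / real m) ^ m))
      \<le> (\<Sum>n. B n * inverse ((1 + real n / c / real m) ^ m))"
      unfolding suminf_inverse_power_eq_shifted_powr[OF A c m]
        suminf_inverse_power_eq_shifted_powr[OF B c m]
      using le[of m "real m * c"] c by (intro mult_left_mono) auto
  qed
  from tendsto_le[OF _ tendsto_suminf_inverse_exp_limit[OF B c]
      tendsto_suminf_inverse_exp_limit[OF A c] le_eventually]
  show ?thesis
    by (simp add: x_pow)
qed

theorem theorem6p5:
  fixes xi1 xi2 :: "nat pmf"
  assumes "critical_finvar xi1" and "critical_finvar xi2"
  shows "((\<forall>\<alpha>::int. \<alpha> < 0 \<longrightarrow> (\<forall>t::real. t > 0 \<longrightarrow>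
              gw_moment xi1 (real_of_int \<alpha>) t \<le> gw_moment xi2 (real_of_int \<alpha>) t))
          \<longleftrightarrow> (\<forall>t::real. 0 < t \<and> t < 1 \<longrightarrow> pgf xi1 t \<le> pgf xi2 t))
       \<and> ((\<forall>t::real. 0 < t \<and> t < 1 \<longrightarrow> pgf xi1 t \<le> pgf xi2 t) \<longrightarrow>
          (\<forall>\<alpha>::real. \<alpha> < 0 \<longrightarrow> (\<forall>t::real. t > 0 \<longrightarrow>
              gw_moment xi1 \<alpha> t \<le> gw_moment xi2 \<alpha> t)))"
proof -
  \<comment> \<open>Only \<open>xi1\<close> needs to be critical with positive variance.\<close>
  let ?A = "\<lambda>xi n. gw_size_prob xi (Suc n)"
  have A: "\<And>n. 0 \<le> ?A xi n" "summable (?A xi)" for xi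
    by (simp_all add: gw_size_prob_nonneg summable_gw_size_prob_Suc)
  have gf_le_iff: "gw_size_gf xi1 x \<le> gw_size_gf xi2 x
      \<longleftrightarrow> (\<Sum>n. ?A xi1 n * x ^ n) \<le> (\<Sum>n. ?A xi2 n * x ^ n)" if "0 < x" "x < 1" for x
    using that by (simp add: gw_size_gf_eq_shifted)
  let ?pgf_le = "\<forall>t::real. 0 < t \<and> t < 1 \<longrightarrow> pgf xi1 t \<le> pgf xi2 t"
  have real_moments: "gw_moment xi1 \<alpha> t \<le> gw_moment xi2 \<alpha> t"
    if ?pgf_le "\<alpha> < 0" "0 < t" for \<alpha> t
    unfolding gw_moment_def
    using that gf_le_iff pgf_le_imp_gw_size_gf_le[of xi1 xi2]
    by (intro power_series_le_imp_shifted_powr_le[OF A A]) auto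
  have ?pgf_le
    if int_moments: "\<forall>\<alpha>::int. \<alpha> < 0 \<longrightarrow> (\<forall>t>0. gw_moment xi1 \<alpha> t \<le> gw_moment xi2 \<alpha> t)"
  proof -
    have "gw_moment xi1 (- real m) t \<le> gw_moment xi2 (- real m) t" if "1 \<le> m" "0 < t" for m t
      using int_moments[rule_format, of "- int m" t] that by simp
    then have "gw_size_gf xi1 x \<le> gw_size_gf xi2 x" if "0 < x" "x < 1" for x
      using that gf_le_iff unfolding gw_moment_def
      by (simp add: shifted_powr_le_imp_power_series_le[OF A A])
    then show ?thesis
      using gw_size_gf_le_imp_pgf_le[OF assms(1)] by auto
  qed
  with real_moments show ?thesis
    by auto
qed

end
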